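(* Suppose $\hat{\mathbf h}[t]$ (jointly with $\mathbf h[t]$) is i.i.d. across time and the problem $\max\{\sum_{s=1}^S U_s(x_s):\mathbf x\in\Lambda_{out}\}$ has a feasible solution; let $opt^*$ denote its optimal value. Then for every $\delta>0$ there exists an $\hat{\mathbf h}$-only stationary randomized control scheme $\{x_s^*,P^*[t],c^*[t]\}$ with $0\le P^*[t]\le P_{peak}$ and $0\le x_s^*\le D_s$ such that $$opt^*\le\sum_{s=1}^S U_s(x_s^* )+\delta,\qquad x_s^*\le E\{I(h_s[t],P^*[t])K1_{\{c^*[t]=s\}}\}+\delta\ \ \forall s,\qquad E\{P^*[t]\}\le P_{av}+\delta.$$
   Context: Setting: slotted time; $S$ receivers; true channel $\mathbf h[t]=(h_1[t],\dots,h_S[t])$ and transmitter-side estimate $\hat{\mathbf h}[t]$, with $(h_s[t],\hat h_s[t])$ i.i.d. over $t$ and independent over $s$. Power $0\le P[t]\le P_{peak}$; $I(h_s,P)$ is the per-symbol mutual information, nondecreasing and concave in $P$, $I(h_s,0)=0$, $I(h_s,P_{peak})\le I_{\max}$ w.p.1; $K$ symbols per packet; $c[t]\in\{0,1,\dots,S\}$ is the scheduled receiver (0 = none). Utilities $U_s$ are concave, nondecreasing, continuously differentiable, $U_s(0)=0$, $U_s'(0)=b_s<\infty$; $D_s>0$, $P_{av}>0$ given. Region $\Lambda_{out}$: the set of $\mathbf x=(x_1,\dots,x_S)$ for which there is a scheme $\{c[t],P[t]\}$ whose decisions are determined by the past and $\hat{\mathbf h}[t]$ (not $\mathbf h[t]$)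 with, w.p.1, $x_s\le\liminf_{T\to\infty}\frac1T\sum_{t=0}^{T-1}I(h_s[t],P[t])K1_{\{c[t]=s\}}$, $0\le x_s\le D_s$, $\limsup_{T}\frac1T\sum_{t<T}P[t]\le P_{av}$, and $0\le P[t]\le P_{peak}$. An $\hat{\mathbf h}$-only stationary randomized scheme consists of constants $x_s^*$ and, in each slot $t$, a choice $(c^*[t],P^*[t])$ drawn randomly as a function of $\hat{\mathbf h}[t]$ only, with the same conditional distribution given $\hat{\mathbf h}[t]$ in every slot and independently of the past; expectations are then the same for every $t$. *)

theory Defs
  imports "HOL-Probability.Probability"
begin

text \<open>Channel state of one slot: for each receiver s in {1..S} a pair (h_s, hat h_s).
  Independence over s is built in: the slot distribution is the product of the
  per-receiver distributions mu s.\<close>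
definition slot_meas :: "nat \<Rightarrow> (nat \<Rightarrow> ('h \<times> 'e) measure) \<Rightarrow> (nat \<Rightarrow> 'h \<times> 'e) measure" where
  "slot_meas S \<mu> = PiM {1..S} \<mu>"

text \<open>i.i.d. over time: the path space is the infinite product of the slot distribution.\<close>
definition path_meas :: "nat \<Rightarrow> (nat \<Rightarrow> ('h \<times> 'e) measure) \<Rightarrow> (nat \<Rightarrow> nat \<Rightarrow> 'h \<times> 'e) measure" where
  "path_meas S \<mu> = PiM UNIV (\<lambda>_::nat. slot_meas S \<mu>)"

definition est_of :: "nat \<Rightarrow> (nat \<Rightarrow> 'h \<times> 'e) \<Rightarrow> (nat \<Rightarrow> 'e)" where
  "est_of S w = (\<lambda>s\<in>{1..S}. snd (w s))"

definition est_space :: "nat \<Rightarrow> 'e measure \<Rightarrow> (nat \<Rightarrow> 'e) measure" where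
  "est_space S E = PiM {1..S} (\<lambda>_. E)"

text \<open>The region Lambda_out: schemes whose decisions at slot t depend only on the
  past channel states (slots < t) and the current estimate hat h[t].\<close>
definition Lambda_out ::
  "nat \<Rightarrow> (nat \<Rightarrow> ('h \<times> 'e) measure) \<Rightarrow> ('h \<Rightarrow> real \<Rightarrow> real) \<Rightarrow> nat
   \<Rightarrow> (nat \<Rightarrow> real) \<Rightarrow> real \<Rightarrow> real \<Rightarrow> (nat \<Rightarrow> real) set" where
  "Lambda_out S \<mu> I K Dm Ppeak Pav =
    {x. \<exists>(c :: nat \<Rightarrow> (nat \<Rightarrow> nat \<Rightarrow> 'h \<times> 'e) \<Rightarrow> nat) (P :: nat \<Rightarrow> (nat \<Rightarrow> nat \<Rightarrow> 'h \<times> 'e) \<Rightarrow> real).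
       (\<forall>t. c t \<in> path_meas S \<mu> \<rightarrow>\<^sub>M count_space UNIV) \<and>
       (\<forall>t. P t \<in> borel_measurable (path_meas S \<mu>)) \<and>
       (\<forall>t. \<forall>\<omega>\<in>space (path_meas S \<mu>). c t \<omega> \<le> S \<and> 0 \<le> P t \<omega> \<and> P t \<omega> \<le> Ppeak) \<and>
       (\<forall>t. \<forall>\<omega>\<in>space (path_meas S \<mu>). \<forall>\<omega>'\<in>space (path_meas S \<mu>).
          (\<forall>\<tau><t. \<omega> \<tau> = \<omega>' \<tau>) \<and> est_of S (\<omega> t) = est_of S (\<omega>' t)
          \<longrightarrow> c t \<omega> = c t \<omega>' \<and> P t \<omega> = P t \<omega>') \<and>
       (\<forall>s\<in>{1..S}. 0 \<le> x s \<and> x s \<le> Dm s) \<and>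
       (AE \<omega> in path_meas S \<mu>.
          (\<forall>s\<in>{1..S}. ereal (x s) \<le> liminf (\<lambda>T. ereal (1 / real T *
              (\<Sum>t<T. if c t \<omega> = s then I (fst (\<omega> t s)) (P t \<omega>) * real K else 0)))) \<and>
          limsup (\<lambda>T. ereal (1 / real T * (\<Sum>t<T. P t \<omega>))) \<le> ereal Pav)}"

end

theory Submission
  imports Defs
begin

(* Idea: pick a point x of Lambda_out whose utility is within \<delta> of the optimum, together
   with a causal scheme (c, P) achieving it almost surely in the long-run time-average
   sense.  By Fatou's lemma the expected time averages over some finite horizon T are
   within \<delta> of x and of the power budget.  The stationary policy "draw a slot t uniformly
   from {0..<T}, draw an independent channel path, plug the current estimate into slot t,
   and act as the scheme does at slot t" uses only the current estimate and, because the
   scheme is causal and the channel is i.i.d., its per-slot expectations equal those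
   T-slot expected averages. *)

(* Fatou's lemma in the form needed here: if nonnegative integrable functions satisfy
   a \<le> liminf f_n almost everywhere, then their expectations eventually exceed a - \<epsilon>. *)
lemma eventually_integral_gt_of_AE_liminf:
  fixes f :: "nat \<Rightarrow> 'a \<Rightarrow> real"
  assumes "prob_space M"
    and int: "\<And>n. integrable M (f n)"
    and nn: "\<And>n. AE \<omega> in M. 0 \<le> f n \<omega>"
    and lim: "AE \<omega> in M. ereal a \<le> liminf (\<lambda>n. ereal (f n \<omega>))"
    and eps: "\<epsilon> > 0"
  shows "eventually (\<lambda>n. a - \<epsilon> < integral\<^sup>L M (f n)) sequentially"
proof (cases "a - \<epsilon> < 0")
  case True
  have "0 \<le> integral\<^sup>L M (f n)" for n using nn by (intro integral_nonneg_AE) auto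
  with True show ?thesis by (intro always_eventually allI) (smt (verit))
next
  case False
  interpret prob_space M by fact
  have pointwise: "ennreal a \<le> liminf (\<lambda>n. ennreal (f n \<omega>))"
    if "ereal a \<le> liminf (\<lambda>n. ereal (f n \<omega>))" for \<omega>
  proof (subst le_Liminf_iff, intro allI impI)
    fix y assume y: "y < ennreal a"
    then obtain r where r: "y = ennreal r" "0 \<le> r" "r < a"
      by (cases y) (auto simp: ennreal_less_iff)
    have "ereal r < liminf (\<lambda>n. ereal (f n \<omega>))"
      by (rule less_le_trans[OF _ that]) (use r in simp)
    then have "eventually (\<lambda>n. ereal r < ereal (f n \<omega>)) sequentially" by (rule less_LiminfD)
    then show "eventually (\<lambda>n. y < ennreal (f n \<omega>)) sequentially"
      by eventually_elim (use r in \<open>auto intro!: ennreal_lessI\<close>)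
  qed
  have "AE \<omega> in M. ennreal a \<le> liminf (\<lambda>n. ennreal (f n \<omega>))"
    using lim by eventually_elim (rule pointwise)
  then have "ennreal a \<le> (\<integral>\<^sup>+ \<omega>. liminf (\<lambda>n. ennreal (f n \<omega>)) \<partial>M)"
    using nn_integral_mono_AE[of "\<lambda>_. ennreal a" _ M] by (simp add: emeasure_space_1)
  also have "\<dots> \<le> liminf (\<lambda>n. \<integral>\<^sup>+ \<omega>. ennreal (f n \<omega>) \<partial>M)"
    using int by (intro nn_integral_liminf) auto
  also have "(\<lambda>n. \<integral>\<^sup>+ \<omega>. ennreal (f n \<omega>) \<partial>M) = (\<lambda>n. ennreal (integral\<^sup>L M (f n)))"
    using int nn by (intro ext nn_integral_eq_integral) auto
  finally have "ennreal (a - \<epsilon>) < liminf (\<lambda>n. ennreal (integral\<^sup>L M (f n)))"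
    using False eps by (intro less_le_trans[OF ennreal_lessI]) auto
  then have "eventually (\<lambda>n. ennreal (a - \<epsilon>) < ennreal (integral\<^sup>L M (f n))) sequentially"
    by (rule less_LiminfD)
  then show ?thesis
    by eventually_elim (use False in \<open>auto simp: ennreal_less_iff\<close>)
qed

(* The mirror image for upper bounds (applied to B - f_n): uniformly bounded functions
   with limsup f_n \<le> a almost everywhere eventually have expectations below a + \<epsilon>. *)
lemma eventually_integral_lt_of_AE_limsup:
  fixes f :: "nat \<Rightarrow> 'a \<Rightarrow> real"
  assumes M: "prob_space M"
    and int: "\<And>n. integrable M (f n)"
    and bounded: "\<And>n. AE \<omega> in M. f n \<omega> \<le> B"
    and lim: "AE \<omega> in M. limsup (\<lambda>n. ereal (f n \<omega>)) \<le> ereal a"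
    and eps: "\<epsilon> > 0"
  shows "eventually (\<lambda>n. integral\<^sup>L M (f n) < a + \<epsilon>) sequentially"
proof -
  interpret prob_space M by fact
  have lim': "AE \<omega> in M. ereal (B - a) \<le> liminf (\<lambda>n. ereal (B - f n \<omega>))"
    using lim
  proof eventually_elim
    case (elim \<omega>)
    have "liminf (\<lambda>n. ereal (B - f n \<omega>)) = liminf (\<lambda>n. ereal B - ereal (f n \<omega>))"
      by simp
    also have "\<dots> = ereal B - limsup (\<lambda>n. ereal (f n \<omega>))"
      by (rule liminf_ereal_cminus) simp
    finally have "liminf (\<lambda>n. ereal (B - f n \<omega>)) = ereal B - limsup (\<lambda>n. ereal (f n \<omega>))" .
    with elim show ?case by (cases "limsup (\<lambda>n. ereal (f n \<omega>))") auto
  qed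
  have "eventually (\<lambda>n. (B - a) - \<epsilon> < integral\<^sup>L M (\<lambda>\<omega>. B - f n \<omega>)) sequentially"
    using int bounded by (intro eventually_integral_gt_of_AE_liminf[OF M _ _ lim' eps]) auto
  then show ?thesis
    by eventually_elim (simp add: int prob_space)
qed

lemma measurable_fun_upd_PiM:
  "(\<lambda>(x, X). X(t := x)) \<in> M \<Otimes>\<^sub>M PiM (UNIV :: 'i set) (\<lambda>_. M) \<rightarrow>\<^sub>M PiM UNIV (\<lambda>_. M)"
  unfolding case_prod_beta by (rule measurable_fun_upd[where J=UNIV]) auto

lemma integral_fun_upd_PiM:
  fixes f :: "('i \<Rightarrow> 'a) \<Rightarrow> real"
  assumes M: "prob_space M" and f: "integrable (PiM UNIV (\<lambda>_. M)) f"
  shows "integrable M (\<lambda>x. \<integral>X. f (X(t := x)) \<partial>PiM UNIV (\<lambda>_. M))"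
    and "(\<integral>x. (\<integral>X. f (X(t := x)) \<partial>PiM UNIV (\<lambda>_. M)) \<partial>M) = (\<integral>X. f X \<partial>PiM UNIV (\<lambda>_. M))"
proof -
  let ?\<Pi> = "PiM (UNIV :: 'i set) (\<lambda>_. M)"
  interpret M: prob_space M by fact
  interpret \<Pi>: prob_space ?\<Pi> using M by (rule prob_space_PiM)
  interpret pair_prob_space M ?\<Pi> by unfold_locales
  have upd: "(\<lambda>(x, X). X(t := x)) \<in> M \<Otimes>\<^sub>M ?\<Pi> \<rightarrow>\<^sub>M ?\<Pi>"
    by (rule measurable_fun_upd_PiM)
  have distr_eq: "distr (M \<Otimes>\<^sub>M ?\<Pi>) ?\<Pi> (\<lambda>(x, X). X(t := x)) = ?\<Pi>"
    using distr_pair_PiM_eq_PiM[of UNIV "\<lambda>_. M" t] M by simp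
  have f_upd: "integrable (M \<Otimes>\<^sub>M ?\<Pi>) (\<lambda>(x, X). f (X(t := x)))"
    using integrable_distr_eq[OF upd, of f] f distr_eq by (simp add: split_beta')
  show "integrable M (\<lambda>x. \<integral>X. f (X(t := x)) \<partial>?\<Pi>)"
    using integrable_fst'[OF f_upd] by simp
  have "(\<integral>x. (\<integral>X. f (X(t := x)) \<partial>?\<Pi>) \<partial>M) = (\<integral>z. f (case z of (x, X) \<Rightarrow> X(t := x)) \<partial>(M \<Otimes>\<^sub>M ?\<Pi>))"
    using integral_fst'[OF f_upd] by (simp add: split_beta')
  also have "\<dots> = (\<integral>X. f X \<partial>?\<Pi>)"
    using integral_distr[OF upd, of f] f distr_eq by simp
  finally show "(\<integral>x. (\<integral>X. f (X(t := x)) \<partial>?\<Pi>) \<partial>M) = (\<integral>X. f X \<partial>?\<Pi>)" .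
qed

definition replace_estimate ::
  "nat \<Rightarrow> nat \<Rightarrow> (nat \<Rightarrow> 'e) \<Rightarrow> (nat \<Rightarrow> nat \<Rightarrow> 'h \<times> 'e) \<Rightarrow> nat \<Rightarrow> nat \<Rightarrow> 'h \<times> 'e" where
  "replace_estimate S t e \<omega> = \<omega> (t := \<lambda>s\<in>{1..S}. (fst (\<omega> t s), e s))"

definition scheme_action ::
  "nat \<Rightarrow> (nat \<Rightarrow> (nat \<Rightarrow> nat \<Rightarrow> 'h \<times> 'e) \<Rightarrow> nat) \<Rightarrow> (nat \<Rightarrow> (nat \<Rightarrow> nat \<Rightarrow> 'h \<times> 'e) \<Rightarrow> real)
    \<Rightarrow> (nat \<Rightarrow> 'e) \<Rightarrow> nat \<times> (nat \<Rightarrow> nat \<Rightarrow> 'h \<times> 'e) \<Rightarrow> nat \<times> real" where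
  "scheme_action S c P e =
     (\<lambda>(t, \<omega>). (c t (replace_estimate S t e \<omega>), P t (replace_estimate S t e \<omega>)))"

definition time_sharing_kernel ::
  "nat \<Rightarrow> (nat \<Rightarrow> ('h \<times> 'e) measure) \<Rightarrow> (nat \<Rightarrow> (nat \<Rightarrow> nat \<Rightarrow> 'h \<times> 'e) \<Rightarrow> nat)
    \<Rightarrow> (nat \<Rightarrow> (nat \<Rightarrow> nat \<Rightarrow> 'h \<times> 'e) \<Rightarrow> real) \<Rightarrow> nat \<Rightarrow> (nat \<Rightarrow> 'e) \<Rightarrow> (nat \<times> real) measure" where
  "time_sharing_kernel S \<mu> c P T e =
     distr (measure_pmf (pmf_of_set {..<T}) \<Otimes>\<^sub>M path_meas S \<mu>) (count_space UNIV \<Otimes>\<^sub>M borel)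
       (scheme_action S c P e)"

locale causal_scheme =
  fixes S :: nat and H :: "'h measure" and E :: "'e measure"
    and \<mu> :: "nat \<Rightarrow> ('h \<times> 'e) measure"
    and c :: "nat \<Rightarrow> (nat \<Rightarrow> nat \<Rightarrow> 'h \<times> 'e) \<Rightarrow> nat"
    and P :: "nat \<Rightarrow> (nat \<Rightarrow> nat \<Rightarrow> 'h \<times> 'e) \<Rightarrow> real"
    and Ppeak :: real
  assumes mu_prob: "\<And>s. s \<in> {1..S} \<Longrightarrow> prob_space (\<mu> s)"
    and mu_sets: "\<And>s. s \<in> {1..S} \<Longrightarrow> sets (\<mu> s) = sets (H \<Otimes>\<^sub>M E)"
    and c_meas: "\<And>t. c t \<in> path_meas S \<mu> \<rightarrow>\<^sub>M count_space UNIV"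
    and P_meas: "\<And>t. P t \<in> borel_measurable (path_meas S \<mu>)"
    and action_range: "\<And>t \<omega>. \<omega> \<in> space (path_meas S \<mu>) \<Longrightarrow>
       c t \<omega> \<le> S \<and> 0 \<le> P t \<omega> \<and> P t \<omega> \<le> Ppeak"
    and causal: "\<And>t \<omega> \<omega>'. \<omega> \<in> space (path_meas S \<mu>) \<Longrightarrow> \<omega>' \<in> space (path_meas S \<mu>) \<Longrightarrow>
       (\<forall>\<tau><t. \<omega> \<tau> = \<omega>' \<tau>) \<Longrightarrow> est_of S (\<omega> t) = est_of S (\<omega>' t) \<Longrightarrow>
       c t \<omega> = c t \<omega>' \<and> P t \<omega> = P t \<omega>'"
begin

abbreviation "SM \<equiv> slot_meas S \<mu>"
abbreviation "PM \<equiv> path_meas S \<mu>"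
abbreviation "N \<equiv> count_space (UNIV :: nat set) \<Otimes>\<^sub>M (borel :: real measure)"

lemma prob_space_slot: "prob_space SM"
  unfolding slot_meas_def by (intro prob_space_PiM mu_prob)

lemma prob_space_path: "prob_space PM"
  unfolding path_meas_def by (intro prob_space_PiM prob_space_slot)

sublocale PM: prob_space PM by (rule prob_space_path)

lemma space_slot:
  assumes "w \<in> space SM" "s \<in> {1..S}"
  shows "fst (w s) \<in> space H" "snd (w s) \<in> space E"
proof -
  have "w s \<in> space (\<mu> s)" using assms by (auto simp: slot_meas_def space_PiM)
  also have "space (\<mu> s) = space H \<times> space E"
    using sets_eq_imp_space_eq[OF mu_sets[OF assms(2)]] by (simp add: space_pair_measure)
  finally show "fst (w s) \<in> space H" "snd (w s) \<in> space E" by auto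
qed

lemma space_path: "\<omega> \<in> space PM \<Longrightarrow> \<omega> t \<in> space SM"
  by (auto simp: path_meas_def space_PiM)

lemma measurable_channel:
  assumes "s \<in> {1..S}"
  shows "(\<lambda>\<omega>. fst (\<omega> t s)) \<in> PM \<rightarrow>\<^sub>M H"
proof -
  have "(\<lambda>\<omega>. \<omega> t s) \<in> PM \<rightarrow>\<^sub>M \<mu> s"
    using measurable_compose[OF measurable_component_singleton[of t UNIV]
        measurable_component_singleton[OF assms]]
    by (simp add: path_meas_def slot_meas_def)
  moreover have "fst \<in> \<mu> s \<rightarrow>\<^sub>M H"
    by (subst measurable_cong_sets[OF mu_sets[OF assms] refl]) simp
  ultimately show ?thesis by (rule measurable_compose)
qed

lemma measurable_replace_estimate:
  "(\<lambda>(e, \<omega>). replace_estimate S t e \<omega>) \<in> est_space S E \<Otimes>\<^sub>M PM \<rightarrow>\<^sub>M PM"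
proof -
  let ?M = "est_space S E \<Otimes>\<^sub>M PM"
  have slot: "(\<lambda>z. \<lambda>s\<in>{1..S}. (fst (snd z t s), fst z s)) \<in> ?M \<rightarrow>\<^sub>M SM"
    unfolding slot_meas_def
  proof (rule measurable_restrict)
    fix s assume s: "s \<in> {1..S}"
    have "(\<lambda>z. fst (snd z t s)) \<in> ?M \<rightarrow>\<^sub>M H"
      by (rule measurable_compose[OF measurable_snd measurable_channel[OF s]])
    moreover have "(\<lambda>z. fst z s) \<in> ?M \<rightarrow>\<^sub>M E"
      using s unfolding est_space_def by measurable
    ultimately have "(\<lambda>z. (fst (snd z t s), fst z s)) \<in> ?M \<rightarrow>\<^sub>M H \<Otimes>\<^sub>M E"
      by (rule measurable_Pair)
    then show "(\<lambda>z. (fst (snd z t s), fst z s)) \<in> ?M \<rightarrow>\<^sub>M \<mu> s"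
      by (subst measurable_cong_sets[OF refl mu_sets[OF s]])
  qed
  have "(\<lambda>z. (snd z)(t := \<lambda>s\<in>{1..S}. (fst (snd z t s), fst z s))) \<in> ?M \<rightarrow>\<^sub>M PM"
    unfolding path_meas_def
    by (rule measurable_fun_upd[where J=UNIV]) (use slot in \<open>auto simp: path_meas_def\<close>)
  then show ?thesis by (simp add: replace_estimate_def case_prod_beta)
qed

lemma replace_estimate_space:
  assumes "e \<in> space (est_space S E)" "\<omega> \<in> space PM"
  shows "replace_estimate S t e \<omega> \<in> space PM"
  using measurable_space[OF measurable_replace_estimate, of "(e, \<omega>)"] assms
  by (simp add: space_pair_measure)

lemma est_of_space: "w \<in> space SM \<Longrightarrow> est_of S w \<in> space (est_space S E)"
  using space_slot by (auto simp: est_space_def space_PiM est_of_def)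

(* Causality is what makes the construction work: replacing only the estimate of slot t
   by that of a fresh slot state w yields the same decision at slot t as inserting all
   of w, since the decision sees neither the future nor the current true channel. *)
lemma causal_replace_estimate:
  assumes w: "w \<in> space SM" and \<omega>: "\<omega> \<in> space PM"
  shows "c t (replace_estimate S t (est_of S w) \<omega>) = c t (\<omega> (t := w)) \<and>
         P t (replace_estimate S t (est_of S w) \<omega>) = P t (\<omega> (t := w))"
proof (rule causal)
  show "replace_estimate S t (est_of S w) \<omega> \<in> space PM"
    by (rule replace_estimate_space[OF est_of_space[OF w] \<omega>])
  show "\<omega> (t := w) \<in> space PM"
    using \<omega> w by (auto simp: path_meas_def space_PiM PiE_iff)
  show "est_of S (replace_estimate S t (est_of S w) \<omega> t) = est_of S ((\<omega> (t := w)) t)"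
    by (simp add: replace_estimate_def est_of_def fun_eq_iff)
qed (simp add: replace_estimate_def)

lemma scheme_action_range:
  assumes "e \<in> space (est_space S E)" "z \<in> space (measure_pmf p \<Otimes>\<^sub>M PM)"
  shows "fst (scheme_action S c P e z) \<le> S \<and> 0 \<le> snd (scheme_action S c P e z) \<and>
    snd (scheme_action S c P e z) \<le> Ppeak"
  using assms action_range[OF replace_estimate_space]
  by (auto simp: scheme_action_def space_pair_measure split: prod.split)

(* Joint measurability in the estimate and the randomness; the time index ranges over a
   countable space, so it suffices to check each slot separately. *)
lemma measurable_scheme_action:
  "(\<lambda>(e, z). scheme_action S c P e z) \<in> est_space S E \<Otimes>\<^sub>M (measure_pmf p \<Otimes>\<^sub>M PM) \<rightarrow>\<^sub>M N"
proof -
  let ?M = "est_space S E \<Otimes>\<^sub>M (measure_pmf p \<Otimes>\<^sub>M PM)"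
  have at_time: "(\<lambda>y. (c t (replace_estimate S t (fst y) (snd (snd y))),
      P t (replace_estimate S t (fst y) (snd (snd y))))) \<in> ?M \<rightarrow>\<^sub>M N" for t
  proof -
    have "(\<lambda>y. (fst y, snd (snd y))) \<in> ?M \<rightarrow>\<^sub>M est_space S E \<Otimes>\<^sub>M PM"
      by measurable
    from measurable_compose[OF this measurable_replace_estimate]
    have "(\<lambda>y. replace_estimate S t (fst y) (snd (snd y))) \<in> ?M \<rightarrow>\<^sub>M PM" by simp
    then show ?thesis
      by (intro measurable_Pair measurable_compose[OF _ c_meas] measurable_compose[OF _ P_meas])
  qed
  have time: "(\<lambda>y. fst (snd y)) \<in> ?M \<rightarrow>\<^sub>M count_space UNIV"
    by (subst measurable_cong_sets[OF refl, of _ "measure_pmf p"]) auto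
  show ?thesis
    using measurable_compose_countable'[OF at_time time]
    by (simp add: scheme_action_def split_beta')
qed

lemma time_sharing_kernel_measurable:
  "time_sharing_kernel S \<mu> c P T \<in> est_space S E \<rightarrow>\<^sub>M prob_algebra N"
proof -
  have "prob_space (measure_pmf (pmf_of_set {..<T}) \<Otimes>\<^sub>M PM)"
    by (intro prob_space_pair measure_pmf.prob_space_axioms PM.prob_space_axioms)
  then have "(\<lambda>_. measure_pmf (pmf_of_set {..<T}) \<Otimes>\<^sub>M PM)
      \<in> est_space S E \<rightarrow>\<^sub>M prob_algebra (measure_pmf (pmf_of_set {..<T}) \<Otimes>\<^sub>M PM)"
    by (intro measurable_const) (simp add: space_prob_algebra)
  from measurable_distr_prob_space2[OF this measurable_scheme_action]
  show ?thesis by (simp add: time_sharing_kernel_def[abs_def])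
qed

lemma measurable_scheme_action_at:
  "e \<in> space (est_space S E) \<Longrightarrow> scheme_action S c P e \<in> measure_pmf p \<Otimes>\<^sub>M PM \<rightarrow>\<^sub>M N"
  using measurable_compose[OF measurable_Pair1' measurable_scheme_action] by simp

lemma time_sharing_kernel_range:
  assumes e: "e \<in> space (est_space S E)"
  shows "AE cp in time_sharing_kernel S \<mu> c P T e. fst cp \<le> S \<and> 0 \<le> snd cp \<and> snd cp \<le> Ppeak"
proof -
  have "{cp \<in> space N. fst cp \<le> S \<and> 0 \<le> snd cp \<and> snd cp \<le> Ppeak} \<in> sets N"
    by measurable
  moreover have "AE z in measure_pmf (pmf_of_set {..<T}) \<Otimes>\<^sub>M PM.
      fst (scheme_action S c P e z) \<le> S \<and> 0 \<le> snd (scheme_action S c P e z) \<and>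
      snd (scheme_action S c P e z) \<le> Ppeak"
    by (intro AE_I2 scheme_action_range[OF e])
  ultimately show ?thesis
    unfolding time_sharing_kernel_def
    by (subst AE_distr_iff[OF measurable_scheme_action_at[OF e]])
qed

lemma integral_time_sharing_kernel:
  fixes g :: "nat \<times> real \<Rightarrow> real"
  assumes T: "T \<ge> 1" and e: "e \<in> space (est_space S E)"
    and g_meas: "g \<in> borel_measurable N"
    and g_bounded: "\<And>cp. fst cp \<le> S \<Longrightarrow> 0 \<le> snd cp \<Longrightarrow> snd cp \<le> Ppeak \<Longrightarrow> \<bar>g cp\<bar> \<le> B"
  shows "(\<integral>cp. g cp \<partial>time_sharing_kernel S \<mu> c P T e)
    = (\<Sum>t<T. \<integral>\<omega>. g (scheme_action S c P e (t, \<omega>)) \<partial>PM) / real T"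
proof -
  let ?Tm = "measure_pmf (pmf_of_set {..<T})"
  interpret pair_prob_space ?Tm PM by unfold_locales
  have act: "scheme_action S c P e \<in> ?Tm \<Otimes>\<^sub>M PM \<rightarrow>\<^sub>M N"
    by (rule measurable_scheme_action_at[OF e])
  have int: "integrable (?Tm \<Otimes>\<^sub>M PM) (\<lambda>z. g (scheme_action S c P e z))"
  proof (rule P.integrable_const_bound[where B=B])
    show "AE z in ?Tm \<Otimes>\<^sub>M PM. norm (g (scheme_action S c P e z)) \<le> B"
      using scheme_action_range[OF e] g_bounded by (intro AE_I2) auto
  qed (rule measurable_compose[OF act g_meas])
  have "(\<integral>cp. g cp \<partial>time_sharing_kernel S \<mu> c P T e)
      = (\<integral>z. g (scheme_action S c P e z) \<partial>(?Tm \<Otimes>\<^sub>M PM))"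
    unfolding time_sharing_kernel_def by (rule integral_distr[OF act g_meas])
  also have "\<dots> = (\<integral>t. (\<integral>\<omega>. g (scheme_action S c P e (t, \<omega>)) \<partial>PM) \<partial>?Tm)"
    using integral_fst'[OF int] by simp
  also have "\<dots> = (\<Sum>t<T. \<integral>\<omega>. g (scheme_action S c P e (t, \<omega>)) \<partial>PM) / real T"
    using T by (subst integral_pmf_of_set) (auto simp: lessThan_empty_iff)
  finally show ?thesis .
qed

(* The slot state w plays the
   role of slot t of the path, by causality and the invariance of the i.i.d. law. *)
lemma time_sharing_kernel_average:
  fixes g :: "(nat \<Rightarrow> 'h \<times> 'e) \<Rightarrow> nat \<times> real \<Rightarrow> real"
  assumes T: "T \<ge> 1"
    and g_meas: "\<And>w. w \<in> space SM \<Longrightarrow> g w \<in> borel_measurable N"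
    and g_bounded: "\<And>w. w \<in> space SM \<Longrightarrow>
      \<exists>B. \<forall>cp. fst cp \<le> S \<and> 0 \<le> snd cp \<and> snd cp \<le> Ppeak \<longrightarrow> \<bar>g w cp\<bar> \<le> B"
    and g_int: "\<And>t. integrable PM (\<lambda>\<omega>. g (\<omega> t) (c t \<omega>, P t \<omega>))"
  shows "(\<integral>w. (\<integral>cp. g w cp \<partial>time_sharing_kernel S \<mu> c P T (est_of S w)) \<partial>SM)
    = (\<integral>\<omega>. 1 / real T * (\<Sum>t<T. g (\<omega> t) (c t \<omega>, P t \<omega>)) \<partial>PM)"
proof -
  define G where "G = (\<lambda>t \<omega>. g (\<omega> t) (c t \<omega>, P t \<omega>))"
  have PM_eq: "PM = PiM UNIV (\<lambda>_. SM)" by (simp add: path_meas_def)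
  have G_int: "integrable (PiM UNIV (\<lambda>_. SM)) (G t)" for t
    using g_int by (simp add: G_def PM_eq)
  have inner: "(\<integral>cp. g w cp \<partial>time_sharing_kernel S \<mu> c P T (est_of S w))
      = (\<Sum>t<T. \<integral>\<omega>. G t (\<omega> (t := w)) \<partial>PM) / real T" if w: "w \<in> space SM" for w
  proof -
    obtain B where B: "\<forall>cp. fst cp \<le> S \<and> 0 \<le> snd cp \<and> snd cp \<le> Ppeak \<longrightarrow> \<bar>g w cp\<bar> \<le> B"
      using g_bounded[OF w] by blast
    have "(\<integral>cp. g w cp \<partial>time_sharing_kernel S \<mu> c P T (est_of S w))
      = (\<Sum>t<T. \<integral>\<omega>. g w (scheme_action S c P (est_of S w) (t, \<omega>)) \<partial>PM) / real T"
      using B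
      by (intro integral_time_sharing_kernel[OF T est_of_space[OF w] g_meas[OF w], of B]) auto
    also have "\<dots> = (\<Sum>t<T. \<integral>\<omega>. G t (\<omega> (t := w)) \<partial>PM) / real T"
      using causal_replace_estimate[OF w]
      by (intro arg_cong2[where f="(/)"] sum.cong Bochner_Integration.integral_cong)
         (auto simp: G_def scheme_action_def)
    finally show ?thesis .
  qed
  have "(\<integral>w. (\<integral>cp. g w cp \<partial>time_sharing_kernel S \<mu> c P T (est_of S w)) \<partial>SM)
      = (\<integral>w. (\<Sum>t<T. \<integral>\<omega>. G t (\<omega> (t := w)) \<partial>PM) / real T \<partial>SM)"
    by (rule Bochner_Integration.integral_cong[OF refl inner])
  also have "\<dots> = (\<Sum>t<T. \<integral>w. (\<integral>\<omega>. G t (\<omega> (t := w)) \<partial>PM) \<partial>SM) / real T"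
    using integral_fun_upd_PiM(1)[OF prob_space_slot G_int]
    by (simp add: PM_eq Bochner_Integration.integral_sum)
  also have "\<dots> = (\<Sum>t<T. \<integral>\<omega>. G t \<omega> \<partial>PM) / real T"
    using integral_fun_upd_PiM(2)[OF prob_space_slot G_int] by (simp add: PM_eq)
  also have "\<dots> = (\<integral>\<omega>. 1 / real T * (\<Sum>t<T. G t \<omega>) \<partial>PM)"
    using g_int by (simp add: G_def Bochner_Integration.integral_sum)
  finally show ?thesis by (simp add: G_def)
qed

lemma Ppeak_nonneg: "0 \<le> Ppeak"
proof -
  obtain \<omega> where "\<omega> \<in> space PM" using PM.not_empty by blast
  then show ?thesis using action_range[of \<omega> 0] by auto
qed

lemma average_power_range:
  assumes "\<omega> \<in> space PM"
  shows "1 / real T * (\<Sum>t<T. P t \<omega>) \<le> Ppeak"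
proof -
  have P: "0 \<le> P t \<omega>" "P t \<omega> \<le> Ppeak" for t using action_range[OF assms] by auto
  have "(\<Sum>t<T. P t \<omega>) \<le> real T * Ppeak"
    using sum_bounded_above[of "{..<T}" "\<lambda>t. P t \<omega>" Ppeak] P by simp
  then show ?thesis
    using Ppeak_nonneg by (cases "T = 0") (auto simp: field_simps)
qed

lemma power_integrable: "integrable PM (P t)"
proof (rule PM.integrable_const_bound[where B=Ppeak])
  show "AE \<omega> in PM. norm (P t \<omega>) \<le> Ppeak"
    using action_range by (intro AE_I2) auto
qed (rule P_meas)

end

definition slot_reward ::
  "('h \<Rightarrow> real \<Rightarrow> real) \<Rightarrow> nat \<Rightarrow> nat \<Rightarrow> (nat \<Rightarrow> 'h \<times> 'e) \<Rightarrow> nat \<times> real \<Rightarrow> real" where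
  "slot_reward I K s w cp = (if fst cp = s then I (fst (w s)) (snd cp) * real K else 0)"

locale rate_scheme = causal_scheme S H E \<mu> c P Ppeak
  for S and H :: "'h measure" and E :: "'e measure" and \<mu> c P Ppeak +
  fixes I :: "'h \<Rightarrow> real \<Rightarrow> real" and Imax :: real
  assumes I_meas: "(\<lambda>(h, p). I h p) \<in> borel_measurable (H \<Otimes>\<^sub>M borel)"
    and I_mono: "\<And>h. h \<in> space H \<Longrightarrow> mono_on {0..Ppeak} (I h)"
    and I_zero: "\<And>h. h \<in> space H \<Longrightarrow> I h 0 = 0"
    and I_bound: "\<And>s. s \<in> {1..S} \<Longrightarrow> AE w in \<mu> s. I (fst w) Ppeak \<le> Imax"
begin

lemma slot_reward_bounds:
  assumes w: "w \<in> space SM" and s: "s \<in> {1..S}" and p: "0 \<le> snd cp" "snd cp \<le> Ppeak"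
  shows "0 \<le> slot_reward I K s w cp" "slot_reward I K s w cp \<le> I (fst (w s)) Ppeak * real K"
proof -
  have h: "fst (w s) \<in> space H" by (rule space_slot[OF w s])
  have "I (fst (w s)) 0 \<le> I (fst (w s)) (snd cp)" "I (fst (w s)) (snd cp) \<le> I (fst (w s)) Ppeak"
    using p by (auto intro!: mono_onD[OF I_mono[OF h]])
  then show "0 \<le> slot_reward I K s w cp" "slot_reward I K s w cp \<le> I (fst (w s)) Ppeak * real K"
    using I_zero[OF h] by (auto simp: slot_reward_def intro: mult_right_mono)
qed

lemma slot_reward_measurable:
  assumes w: "w \<in> space SM" and s: "s \<in> {1..S}"
  shows "slot_reward I K s w \<in> borel_measurable N"
proof -
  have "I (fst (w s)) \<in> borel_measurable borel"
    using measurable_compose[OF measurable_Pair1'[OF space_slot(1)[OF w s]] I_meas] by simp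
  then show ?thesis unfolding slot_reward_def by measurable
qed

lemma reward_process_integrable:
  assumes s: "s \<in> {1..S}"
  shows "integrable PM (\<lambda>\<omega>. slot_reward I K s (\<omega> t) (c t \<omega>, P t \<omega>))"
proof (rule PM.integrable_const_bound[where B="Imax * real K"])
  have "AE w in SM. I (fst (w s)) Ppeak \<le> Imax"
    unfolding slot_meas_def using I_bound[OF s] mu_prob s
    by (intro AE_PiM_component[where P="\<lambda>w. I (fst w) Ppeak \<le> Imax"]) simp_all
  then have "AE \<omega> in PM. I (fst (\<omega> t s)) Ppeak \<le> Imax"
    unfolding path_meas_def using prob_space_slot
    by (intro AE_PiM_component[where P="\<lambda>w. I (fst (w s)) Ppeak \<le> Imax"]) simp_all
  then show "AE \<omega> in PM. norm (slot_reward I K s (\<omega> t) (c t \<omega>, P t \<omega>)) \<le> Imax * real K"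
  proof (rule AE_mp, intro AE_I2 impI)
    fix \<omega> assume \<omega>: "\<omega> \<in> space PM" and bound: "I (fst (\<omega> t s)) Ppeak \<le> Imax"
    have "0 \<le> P t \<omega>" "P t \<omega> \<le> Ppeak" using action_range[OF \<omega>] by auto
    note r = slot_reward_bounds[OF space_path[OF \<omega>, of t] s, where cp="(c t \<omega>, P t \<omega>)" and K=K]
    show "norm (slot_reward I K s (\<omega> t) (c t \<omega>, P t \<omega>)) \<le> Imax * real K"
      using r \<open>0 \<le> P t \<omega>\<close> \<open>P t \<omega> \<le> Ppeak\<close> mult_right_mono[OF bound, of "real K"] by auto
  qed
  have rate: "(\<lambda>\<omega>. I (fst (\<omega> t s)) (P t \<omega>)) \<in> borel_measurable PM"
    using measurable_compose[OF measurable_Pair[OF measurable_channel[OF s] P_meas] I_meas] by simp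
  have scheduled: "{\<omega> \<in> space PM. c t \<omega> = s} \<in> sets PM"
    using measurable_sets[OF c_meas, of "{s}"] by (simp add: vimage_def Int_def conj_commute)
  have "(\<lambda>\<omega>. slot_reward I K s (\<omega> t) (c t \<omega>, P t \<omega>)) =
      (\<lambda>\<omega>. if c t \<omega> = s then I (fst (\<omega> t s)) (P t \<omega>) * real K else 0)"
    by (simp add: slot_reward_def fun_eq_iff)
  also have "\<dots> \<in> borel_measurable PM"
    by (rule measurable_If[OF borel_measurable_times[OF rate] _ scheduled]) auto
  finally show "(\<lambda>\<omega>. slot_reward I K s (\<omega> t) (c t \<omega>, P t \<omega>)) \<in> borel_measurable PM" .
qed

lemma finite_horizon_averages:
  assumes rates: "AE \<omega> in PM. \<forall>s\<in>{1..S}. ereal (x s) \<le>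
      liminf (\<lambda>T. ereal (1 / real T * (\<Sum>t<T. slot_reward I K s (\<omega> t) (c t \<omega>, P t \<omega>))))"
    and power: "AE \<omega> in PM. limsup (\<lambda>T. ereal (1 / real T * (\<Sum>t<T. P t \<omega>))) \<le> ereal Pav"
    and \<delta>: "\<delta> > 0"
  obtains T where "T \<ge> 1"
    and "\<And>s. s \<in> {1..S} \<Longrightarrow>
      x s - \<delta> < (\<integral>\<omega>. 1 / real T * (\<Sum>t<T. slot_reward I K s (\<omega> t) (c t \<omega>, P t \<omega>)) \<partial>PM)"
    and "(\<integral>\<omega>. 1 / real T * (\<Sum>t<T. P t \<omega>) \<partial>PM) < Pav + \<delta>"
proof -
  have rate_eventually: "eventually (\<lambda>T. x s - \<delta> <
      (\<integral>\<omega>. 1 / real T * (\<Sum>t<T. slot_reward I K s (\<omega> t) (c t \<omega>, P t \<omega>)) \<partial>PM)) sequentially"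
    if s: "s \<in> {1..S}" for s
  proof (rule eventually_integral_gt_of_AE_liminf[OF prob_space_path _ _ _ \<delta>])
    show "integrable PM (\<lambda>\<omega>. 1 / real T * (\<Sum>t<T. slot_reward I K s (\<omega> t) (c t \<omega>, P t \<omega>)))" for T
      using reward_process_integrable[OF s] by auto
    show "AE \<omega> in PM. 0 \<le> 1 / real T * (\<Sum>t<T. slot_reward I K s (\<omega> t) (c t \<omega>, P t \<omega>))" for T
      using slot_reward_bounds(1)[OF space_path s] action_range
      by (intro AE_I2 mult_nonneg_nonneg sum_nonneg) auto
    show "AE \<omega> in PM. ereal (x s) \<le>
        liminf (\<lambda>T. ereal (1 / real T * (\<Sum>t<T. slot_reward I K s (\<omega> t) (c t \<omega>, P t \<omega>))))"
      using rates by eventually_elim (use s in blast)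
  qed
  have power_eventually: "eventually (\<lambda>T. (\<integral>\<omega>. 1 / real T * (\<Sum>t<T. P t \<omega>) \<partial>PM) < Pav + \<delta>) sequentially"
  proof (rule eventually_integral_lt_of_AE_limsup[OF prob_space_path _ _ power \<delta>])
    show "integrable PM (\<lambda>\<omega>. 1 / real T * (\<Sum>t<T. P t \<omega>))" for T
      using power_integrable by auto
    show "AE \<omega> in PM. 1 / real T * (\<Sum>t<T. P t \<omega>) \<le> Ppeak" for T
      using average_power_range by (intro AE_I2)
  qed
  have "eventually (\<lambda>T. T \<ge> 1 \<and> (\<forall>s\<in>{1..S}. x s - \<delta> <
      (\<integral>\<omega>. 1 / real T * (\<Sum>t<T. slot_reward I K s (\<omega> t) (c t \<omega>, P t \<omega>)) \<partial>PM)) \<and>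
      (\<integral>\<omega>. 1 / real T * (\<Sum>t<T. P t \<omega>) \<partial>PM) < Pav + \<delta>) sequentially"
    using rate_eventually by (intro eventually_conj eventually_ge_at_top eventually_ball_finite power_eventually) auto
  then show ?thesis using that unfolding eventually_sequentially by blast
qed

lemma stationary_approximation:
  assumes rates: "AE \<omega> in PM. \<forall>s\<in>{1..S}. ereal (x s) \<le>
      liminf (\<lambda>T. ereal (1 / real T * (\<Sum>t<T. slot_reward I K s (\<omega> t) (c t \<omega>, P t \<omega>))))"
    and power: "AE \<omega> in PM. limsup (\<lambda>T. ereal (1 / real T * (\<Sum>t<T. P t \<omega>))) \<le> ereal Pav"
    and \<delta>: "\<delta> > 0"
  shows "\<exists>\<kappa>. \<kappa> \<in> est_space S E \<rightarrow>\<^sub>M prob_algebra N \<and>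
    (\<forall>e\<in>space (est_space S E). AE cp in \<kappa> e. fst cp \<le> S \<and> 0 \<le> snd cp \<and> snd cp \<le> Ppeak) \<and>
    (\<forall>s\<in>{1..S}. x s \<le> (\<integral>w. (\<integral>cp. slot_reward I K s w cp \<partial>\<kappa> (est_of S w)) \<partial>SM) + \<delta>) \<and>
    (\<integral>w. (\<integral>cp. snd cp \<partial>\<kappa> (est_of S w)) \<partial>SM) \<le> Pav + \<delta>"
proof -
  obtain T where T: "T \<ge> 1"
    and rate_T: "\<And>s. s \<in> {1..S} \<Longrightarrow>
      x s - \<delta> < (\<integral>\<omega>. 1 / real T * (\<Sum>t<T. slot_reward I K s (\<omega> t) (c t \<omega>, P t \<omega>)) \<partial>PM)"
    and power_T: "(\<integral>\<omega>. 1 / real T * (\<Sum>t<T. P t \<omega>) \<partial>PM) < Pav + \<delta>"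
    using finite_horizon_averages[OF rates power \<delta>] by blast
  let ?\<kappa> = "time_sharing_kernel S \<mu> c P T"
  have rate_eq: "(\<integral>w. (\<integral>cp. slot_reward I K s w cp \<partial>?\<kappa> (est_of S w)) \<partial>SM)
      = (\<integral>\<omega>. 1 / real T * (\<Sum>t<T. slot_reward I K s (\<omega> t) (c t \<omega>, P t \<omega>)) \<partial>PM)"
    if s: "s \<in> {1..S}" for s
  proof (rule time_sharing_kernel_average[OF T])
    fix w assume w: "w \<in> space SM"
    show "slot_reward I K s w \<in> borel_measurable N" by (rule slot_reward_measurable[OF w s])
    show "\<exists>B. \<forall>cp. fst cp \<le> S \<and> 0 \<le> snd cp \<and> snd cp \<le> Ppeak \<longrightarrow> \<bar>slot_reward I K s w cp\<bar> \<le> B"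
      using slot_reward_bounds[OF w s] by (intro exI[of _ "I (fst (w s)) Ppeak * real K"]) auto
  qed (rule reward_process_integrable[OF s])
  have power_eq: "(\<integral>w. (\<integral>cp. snd cp \<partial>?\<kappa> (est_of S w)) \<partial>SM) = (\<integral>\<omega>. 1 / real T * (\<Sum>t<T. P t \<omega>) \<partial>PM)"
    using time_sharing_kernel_average[OF T, where g="\<lambda>w cp. snd cp"] power_integrable
    by (auto intro: exI[of _ Ppeak])
  show ?thesis
    using time_sharing_kernel_measurable time_sharing_kernel_range rate_T power_T rate_eq power_eq
    by (intro exI[of _ ?\<kappa>]) force
qed

end

lemma exists_near_Sup:
  fixes f :: "'a \<Rightarrow> real"
  assumes "A \<noteq> {}" and "\<And>x. x \<in> A \<Longrightarrow> f x \<le> B" and "\<delta> > 0"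
  obtains x where "x \<in> A" and "(SUP y\<in>A. f y) \<le> f x + \<delta>"
proof -
  have "bdd_above (f ` A)" using assms(2) by (intro bdd_aboveI) auto
  moreover have "(SUP y\<in>A. f y) - \<delta> < (SUP y\<in>A. f y)" using assms(3) by simp
  ultimately obtain x where "x \<in> A" "(SUP y\<in>A. f y) - \<delta> < f x"
    using less_cSUP_iff[OF assms(1)] by blast
  then show ?thesis using that by force
qed

lemma Lambda_out_rate_range:
  "x \<in> Lambda_out S \<mu> I K Dm Ppeak Pav \<Longrightarrow> s \<in> {1..S} \<Longrightarrow> 0 \<le> x s \<and> x s \<le> Dm s"
  unfolding Lambda_out_def mem_Collect_eq by (elim exE conjE) (drule bspec, assumption)

lemma Lambda_out_rate_scheme:
  fixes H :: "'h measure" and E :: "'e measure"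
  assumes xL: "x \<in> Lambda_out S \<mu> I K Dm Ppeak Pav"
    and mu: "\<forall>s\<in>{1..S}. prob_space (\<mu> s) \<and> sets (\<mu> s) = sets (H \<Otimes>\<^sub>M E)"
    and I_meas: "(\<lambda>(h, p). I h p) \<in> borel_measurable (H \<Otimes>\<^sub>M borel)"
    and I_mono: "\<forall>h\<in>space H. mono_on {0..Ppeak} (I h)"
    and I_zero: "\<forall>h\<in>space H. I h 0 = 0"
    and I_bound: "\<forall>s\<in>{1..S}. AE w in \<mu> s. I (fst w) Ppeak \<le> Imax"
  obtains c P where "rate_scheme S H E \<mu> c P Ppeak I Imax"
    and "\<forall>s\<in>{1..S}. 0 \<le> x s \<and> x s \<le> Dm s"
    and "AE \<omega> in path_meas S \<mu>. \<forall>s\<in>{1..S}. ereal (x s) \<le>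
      liminf (\<lambda>T. ereal (1 / real T * (\<Sum>t<T. slot_reward I K s (\<omega> t) (c t \<omega>, P t \<omega>))))"
    and "AE \<omega> in path_meas S \<mu>. limsup (\<lambda>T. ereal (1 / real T * (\<Sum>t<T. P t \<omega>))) \<le> ereal Pav"
proof -
  from xL obtain c P where
    c_meas: "\<forall>t. c t \<in> path_meas S \<mu> \<rightarrow>\<^sub>M count_space UNIV"
    and P_meas: "\<forall>t. P t \<in> borel_measurable (path_meas S \<mu>)"
    and action_range: "\<forall>t. \<forall>\<omega>\<in>space (path_meas S \<mu>).
      c t \<omega> \<le> S \<and> 0 \<le> P t \<omega> \<and> P t \<omega> \<le> Ppeak"
    and causal: "\<forall>t. \<forall>\<omega>\<in>space (path_meas S \<mu>). \<forall>\<omega>'\<in>space (path_meas S \<mu>).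
      (\<forall>\<tau><t. \<omega> \<tau> = \<omega>' \<tau>) \<and> est_of S (\<omega> t) = est_of S (\<omega>' t) \<longrightarrow>
      c t \<omega> = c t \<omega>' \<and> P t \<omega> = P t \<omega>'"
    and x_range: "\<forall>s\<in>{1..S}. 0 \<le> x s \<and> x s \<le> Dm s"
    and averages: "AE \<omega> in path_meas S \<mu>.
      (\<forall>s\<in>{1..S}. ereal (x s) \<le> liminf (\<lambda>T. ereal (1 / real T *
          (\<Sum>t<T. slot_reward I K s (\<omega> t) (c t \<omega>, P t \<omega>))))) \<and>
      limsup (\<lambda>T. ereal (1 / real T * (\<Sum>t<T. P t \<omega>))) \<le> ereal Pav"
    unfolding Lambda_out_def mem_Collect_eq
    by (elim exE conjE) (rule that[unfolded slot_reward_def fst_conv snd_conv]; assumption)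
  have scheme: "rate_scheme S H E \<mu> c P Ppeak I Imax"
  proof (intro rate_scheme.intro causal_scheme.intro rate_scheme_axioms.intro)
    show "\<And>s. s \<in> {1..S} \<Longrightarrow> prob_space (\<mu> s)"
      and "\<And>s. s \<in> {1..S} \<Longrightarrow> sets (\<mu> s) = sets (H \<Otimes>\<^sub>M E)"
      using mu by blast+
    show "\<And>t. c t \<in> path_meas S \<mu> \<rightarrow>\<^sub>M count_space UNIV"
      and "\<And>t. P t \<in> borel_measurable (path_meas S \<mu>)"
      using c_meas P_meas by blast+
    show "\<And>t \<omega>. \<omega> \<in> space (path_meas S \<mu>) \<Longrightarrow> c t \<omega> \<le> S \<and> 0 \<le> P t \<omega> \<and> P t \<omega> \<le> Ppeak"
      using action_range by blast
    show "\<And>t \<omega> \<omega>'. \<omega> \<in> space (path_meas S \<mu>) \<Longrightarrow> \<omega>' \<in> space (path_meas S \<mu>) \<Longrightarrow>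
       (\<forall>\<tau><t. \<omega> \<tau> = \<omega>' \<tau>) \<Longrightarrow> est_of S (\<omega> t) = est_of S (\<omega>' t) \<Longrightarrow>
       c t \<omega> = c t \<omega>' \<and> P t \<omega> = P t \<omega>'"
      using causal by blast
    show "\<And>h. h \<in> space H \<Longrightarrow> mono_on {0..Ppeak} (I h)" and "\<And>h. h \<in> space H \<Longrightarrow> I h 0 = 0"
      and "\<And>s. s \<in> {1..S} \<Longrightarrow> AE w in \<mu> s. I (fst w) Ppeak \<le> Imax"
      using I_mono I_zero I_bound by blast+
  qed (rule I_meas)
  note averages' = averages[unfolded AE_conj_iff]
  show ?thesis
    by (rule that[OF scheme x_range conjunct1[OF averages'] conjunct2[OF averages']])
qed

theorem lemma4:
  fixes S K :: nat
    and H :: "'h measure" and E :: "'e measure"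
    and \<mu> :: "nat \<Rightarrow> ('h \<times> 'e) measure"
    and I :: "'h \<Rightarrow> real \<Rightarrow> real"
    and U U' :: "nat \<Rightarrow> real \<Rightarrow> real"
    and Dm :: "nat \<Rightarrow> real"
    and Ppeak Pav Imax \<delta> :: real
  assumes mu: "\<forall>s\<in>{1..S}. prob_space (\<mu> s) \<and> sets (\<mu> s) = sets (H \<Otimes>\<^sub>M E)"
    and I_meas: "(\<lambda>(h, p). I h p) \<in> borel_measurable (H \<Otimes>\<^sub>M borel)"
    and I_mono: "\<forall>h\<in>space H. mono_on {0..Ppeak} (I h)"
    and I_concave: "\<forall>h\<in>space H. concave_on {0..Ppeak} (I h)"
    and I_zero: "\<forall>h\<in>space H. I h 0 = 0"
    and I_bound: "\<forall>s\<in>{1..S}. AE w in \<mu> s. I (fst w) Ppeak \<le> Imax"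
    and K_pos: "K > 0"
    and Ppeak: "0 \<le> Ppeak"
    and Pav: "0 < Pav"
    and Dm_pos: "\<forall>s\<in>{1..S}. 0 < Dm s"
    and U: "\<forall>s\<in>{1..S}. concave_on {0..} (U s) \<and> mono_on {0..} (U s) \<and> U s 0 = 0 \<and>
              (\<forall>x\<ge>0. (U s has_real_derivative U' s x) (at x within {0..})) \<and>
              continuous_on {0..} (U' s)"
    and feasible: "Lambda_out S \<mu> I K Dm Ppeak Pav \<noteq> {}"
    and delta: "\<delta> > 0"
  shows "\<exists>(xs :: nat \<Rightarrow> real) (\<kappa> :: (nat \<Rightarrow> 'e) \<Rightarrow> (nat \<times> real) measure).
     \<kappa> \<in> est_space S E \<rightarrow>\<^sub>M prob_algebra (count_space UNIV \<Otimes>\<^sub>M borel) \<and>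
     (\<forall>e\<in>space (est_space S E). AE cp in \<kappa> e. fst cp \<le> S \<and> 0 \<le> snd cp \<and> snd cp \<le> Ppeak) \<and>
     (\<forall>s\<in>{1..S}. 0 \<le> xs s \<and> xs s \<le> Dm s) \<and>
     (SUP x\<in>Lambda_out S \<mu> I K Dm Ppeak Pav. \<Sum>s=1..S. U s (x s)) \<le> (\<Sum>s=1..S. U s (xs s)) + \<delta> \<and>
     (\<forall>s\<in>{1..S}. xs s \<le>
        (\<integral>w. (\<integral>cp. (if fst cp = s then I (fst (w s)) (snd cp) * real K else 0) \<partial>\<kappa> (est_of S w))
           \<partial>slot_meas S \<mu>) + \<delta>) \<and>
     (\<integral>w. (\<integral>cp. snd cp \<partial>\<kappa> (est_of S w)) \<partial>slot_meas S \<mu>) \<le> Pav + \<delta>"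
proof -
  let ?L = "Lambda_out S \<mu> I K Dm Ppeak Pav"
  have bounded: "(\<Sum>s=1..S. U s (x s)) \<le> (\<Sum>s=1..S. U s (Dm s))" if "x \<in> ?L" for x
  proof (rule sum_mono)
    fix s assume s: "s \<in> {1..S}"
    have "mono_on {0..} (U s)" using U s by blast
    then show "U s (x s) \<le> U s (Dm s)"
      using Lambda_out_rate_range[OF that s] by (auto elim!: mono_onD)
  qed
  obtain x where xL: "x \<in> ?L"
    and near_opt: "(SUP y\<in>?L. \<Sum>s=1..S. U s (y s)) \<le> (\<Sum>s=1..S. U s (x s)) + \<delta>"
    using exists_near_Sup[of ?L "\<lambda>y. \<Sum>s=1..S. U s (y s)", OF feasible bounded delta] by blast
  from xL obtain c P where scheme: "rate_scheme S H E \<mu> c P Ppeak I Imax"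
    and x_range: "\<forall>s\<in>{1..S}. 0 \<le> x s \<and> x s \<le> Dm s"
    and rates: "AE \<omega> in path_meas S \<mu>. \<forall>s\<in>{1..S}. ereal (x s) \<le>
      liminf (\<lambda>T. ereal (1 / real T * (\<Sum>t<T. slot_reward I K s (\<omega> t) (c t \<omega>, P t \<omega>))))"
    and power: "AE \<omega> in path_meas S \<mu>. limsup (\<lambda>T. ereal (1 / real T * (\<Sum>t<T. P t \<omega>))) \<le> ereal Pav"
    by (rule Lambda_out_rate_scheme[OF _ mu I_meas I_mono I_zero I_bound])
  interpret rate_scheme S H E \<mu> c P Ppeak I Imax by (rule scheme)
  obtain \<kappa> where \<kappa>: "\<kappa> \<in> est_space S E \<rightarrow>\<^sub>M prob_algebra (count_space UNIV \<Otimes>\<^sub>M borel)"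
    "\<forall>e\<in>space (est_space S E). AE cp in \<kappa> e. fst cp \<le> S \<and> 0 \<le> snd cp \<and> snd cp \<le> Ppeak"
    "\<forall>s\<in>{1..S}. x s \<le> (\<integral>w. (\<integral>cp. slot_reward I K s w cp \<partial>\<kappa> (est_of S w)) \<partial>slot_meas S \<mu>) + \<delta>"
    "(\<integral>w. (\<integral>cp. snd cp \<partial>\<kappa> (est_of S w)) \<partial>slot_meas S \<mu>) \<le> Pav + \<delta>"
    using stationary_approximation[OF rates power delta] by blast
  show ?thesis
    using \<kappa> x_range near_opt unfolding slot_reward_def by blast
qed

end
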